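(* Let $B\subseteq X$ be a ranked set whose rank $\rho(B)$ is the maximum rank $k=\max\{\rho(x)\mid x\in X\}$ of $\Sigma$. Then $B^{\nearrow\nearrow}=\{C\}$ where $C=\{x\in X \mid \rho(x)\leq \rho(B),\ x\not\in B\}$.
   Context: Let $(X,\Sigma)$ be a ranked unit implicational base (implications $A\rightarrow b$ with $b\in X$, $A\subseteq X$) with rank function $\rho:X\rightarrow\mathbb{N}$, meaning that whenever $A\rightarrow b\in\Sigma$ and $a\in A$ then $\rho(a)=\rho(b)+1$; in particular $\Sigma$ is acyclic. Without loss of generality $\Sigma$ is the critical base (the unique irredundant implicational base of minimal generators) of the associated convex geometry. Let $\phi$ be its closure operator and $\C_\Sigma$ its family of closed sets. For $B\subseteq X$, define $B^{\nearrow\nearrow}=\max_\subseteq\{C\in\C_\Sigma \mid C\cap B=\emptyset\}$, the inclusion-maximal closed sets disjoint from $B$. A set $B\subseteq X$ is ranked if all its elements have the same rank, denoted $\rho(B)$. *)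

theory Defs
  imports Main
begin

text \<open>A unit implicational base on ground set X: a set of pairs (A, b) read as A \<rightarrow> b.\<close>
definition unit_base :: "'a set \<Rightarrow> ('a set \<times> 'a) set \<Rightarrow> bool" where
  "unit_base X \<Sigma> \<longleftrightarrow> finite X \<and> (\<forall>(A, b) \<in> \<Sigma>. A \<subseteq> X \<and> b \<in> X \<and> b \<notin> A)"

definition ranked_base :: "('a set \<times> 'a) set \<Rightarrow> ('a \<Rightarrow> nat) \<Rightarrow> bool" where
  "ranked_base \<Sigma> \<rho> \<longleftrightarrow> (\<forall>(A, b) \<in> \<Sigma>. \<forall>a \<in> A. \<rho> a = \<rho> b + 1)"

definition closed_sets :: "'a set \<Rightarrow> ('a set \<times> 'a) set \<Rightarrow> 'a set set" where
  "closed_sets X \<Sigma> = {C. C \<subseteq> X \<and> (\<forall>(A, b) \<in> \<Sigma>. A \<subseteq> C \<longrightarrow> b \<in> C)}"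

definition closure_op :: "'a set \<Rightarrow> ('a set \<times> 'a) set \<Rightarrow> 'a set \<Rightarrow> 'a set" where
  "closure_op X \<Sigma> Y = \<Inter> {C \<in> closed_sets X \<Sigma>. Y \<subseteq> C}"

definition convex_geometry :: "'a set \<Rightarrow> ('a set \<times> 'a) set \<Rightarrow> bool" where
  "convex_geometry X \<Sigma> \<longleftrightarrow> closure_op X \<Sigma> {} = {} \<and>
     (\<forall>Y \<in> closed_sets X \<Sigma>. \<forall>x \<in> X. \<forall>y \<in> X. x \<noteq> y \<and> x \<notin> Y \<and> y \<notin> Y \<and>
        y \<in> closure_op X \<Sigma> (insert x Y) \<longrightarrow> x \<notin> closure_op X \<Sigma> (insert y Y))"

text \<open>B^{\<nearrow>\<nearrow>}: inclusion-maximal closed sets disjoint from B.\<close>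
definition max_disjoint :: "'a set \<Rightarrow> ('a set \<times> 'a) set \<Rightarrow> 'a set \<Rightarrow> 'a set set" where
  "max_disjoint X \<Sigma> B = {C \<in> closed_sets X \<Sigma>. C \<inter> B = {} \<and>
      (\<forall>D \<in> closed_sets X \<Sigma>. D \<inter> B = {} \<longrightarrow> C \<subseteq> D \<longrightarrow> D = C)}"

end

theory Submission
  imports Defs
begin

text \<open>Premises of implications have rank one more than their conclusions, so no element of
  maximal rank is the conclusion of an implication; convexity is needed only to exclude
  implications with empty premise. Hence X - B is closed, and it contains every closed set
  disjoint from B.\<close>

lemma convex_geometry_premise_nonempty:
  assumes "convex_geometry X \<Sigma>" and "(A, b) \<in> \<Sigma>"
  shows "A \<noteq> {}"
proof
  assume "A = {}"
  with assms(2) have "b \<in> closure_op X \<Sigma> {}"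
    unfolding closure_op_def closed_sets_def by auto
  with assms(1) show False
    unfolding convex_geometry_def by auto
qed

lemma ranked_base_conclusion_rank_less_Max:
  assumes "unit_base X \<Sigma>" and "ranked_base \<Sigma> \<rho>" and "(A, b) \<in> \<Sigma>" and "A \<noteq> {}"
  shows "\<rho> b < Max (\<rho> ` X)"
proof -
  obtain a where "a \<in> A" using assms(4) by auto
  with assms(1,3) have "a \<in> X" "finite X"
    unfolding unit_base_def by auto
  then have "\<rho> a \<le> Max (\<rho> ` X)" by simp
  moreover have "\<rho> a = \<rho> b + 1"
    using assms(2,3) \<open>a \<in> A\<close> unfolding ranked_base_def by auto
  ultimately show ?thesis by simp
qed

lemma closed_sets_diff_non_conclusions:
  assumes "unit_base X \<Sigma>" and "\<forall>(A, b) \<in> \<Sigma>. b \<notin> B"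
  shows "X - B \<in> closed_sets X \<Sigma>"
  using assms unfolding closed_sets_def unit_base_def by fast

lemma max_disjoint_eq_singleton_diff:
  assumes "X - B \<in> closed_sets X \<Sigma>"
  shows "max_disjoint X \<Sigma> B = {X - B}"
proof -
  have below: "D \<subseteq> X - B" if "D \<in> closed_sets X \<Sigma>" "D \<inter> B = {}" for D
    using that unfolding closed_sets_def by auto
  have "X - B \<in> max_disjoint X \<Sigma> B"
    unfolding max_disjoint_def using assms below by blast
  moreover have "E = X - B" if "E \<in> max_disjoint X \<Sigma> B" for E
    using that assms below unfolding max_disjoint_def by blast
  ultimately show ?thesis by blast
qed

theorem proposition7:
  fixes X :: "'a set" and \<Sigma> :: "('a set \<times> 'a) set" and \<rho> :: "'a \<Rightarrow> nat" and B :: "'a set"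
  assumes "unit_base X \<Sigma>"
    and "ranked_base \<Sigma> \<rho>"
    and "convex_geometry X \<Sigma>"
    and "B \<subseteq> X" and "B \<noteq> {}"
    and "\<forall>x \<in> B. \<rho> x = Max (\<rho> ` X)"
  shows "max_disjoint X \<Sigma> B = {{x \<in> X. \<rho> x \<le> Max (\<rho> ` X) \<and> x \<notin> B}}"
proof -
  have "finite X" using assms(1) unfolding unit_base_def by simp
  then have C_eq: "{x \<in> X. \<rho> x \<le> Max (\<rho> ` X) \<and> x \<notin> B} = X - B" by auto
  have "\<forall>(A, b) \<in> \<Sigma>. b \<notin> B"
  proof (clarify)
    fix A b assume "(A, b) \<in> \<Sigma>" "b \<in> B"
    have "A \<noteq> {}"
      using assms(3) \<open>(A, b) \<in> \<Sigma>\<close> by (rule convex_geometry_premise_nonempty)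
    with assms(1,2) \<open>(A, b) \<in> \<Sigma>\<close> have "\<rho> b < Max (\<rho> ` X)"
      by (rule ranked_base_conclusion_rank_less_Max)
    with \<open>b \<in> B\<close> assms(6) show False by simp
  qed
  then have "X - B \<in> closed_sets X \<Sigma>"
    using assms(1) closed_sets_diff_non_conclusions by blast
  then show ?thesis
    unfolding C_eq by (rule max_disjoint_eq_singleton_diff)
qed

end
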